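(* Let $A=(A,\wedge,\vee,\cdot,\to,1)$ be a $\mathsf{DLCMI}$, $a,b\in A$, and $(c,d),(u,w)\in R(a,b)$. Then there are natural numbers $n,k$ such that: 1) $t_n^{2k}(a,b)\cdot(c\to u)\le d\to w$; 2) $t_n^{2k}(a,b)\cdot((c\to u)\wedge a\wedge b)\le (d\to w)\wedge a\wedge b$; 3) $t_n^{2k}(a,b)\cdot((d\to w)\wedge a\wedge b)\le (c\to u)\wedge a\wedge b$; 4) $t_n^{2k}(a,b)\cdot((c\to u)\vee a\vee b)\le (d\to w)\vee a\vee b$; 5) $t_n^{2k}(a,b)\cdot((d\to w)\vee a\vee b)\le (c\to u)\vee a\vee b$; 6) $t_{n+1}^{2k}(a,b)\le (c\to u)\leftrightarrow(d\to w)$.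
   Context: An algebra $(A,\wedge,\vee,\cdot,\to,1)$ of type $(2,2,2,2,0)$ is a $\mathsf{DLCMI}$ if for all $a,b,c\in A$: (1) $(A,\wedge,\vee)$ is a distributive lattice; (2) $1$ is its largest element; (3) $(A,\cdot,1)$ is a commutative monoid; (4) $(a\to b)\wedge(a\to c)=a\to(b\wedge c)$; (5) $(a\to c)\wedge(b\to c)=(a\vee b)\to c$; (6) $a\to a=1$; (7) $(a\vee b)\cdot c=(a\cdot c)\vee(b\cdot c)$; (8) $(a\to b)\cdot(b\to c)\le a\to c$; (9) $a\to b\le (a\cdot c)\to(b\cdot c)$. Notation: $x^0=1$, $x^{m}=x\cdot x^{m-1}$; $\square(x)=1\to x$, $\square^0(x)=x$, $\square^{m}$ the $m$-fold iterate; $x\leftrightarrow y=(x\to y)\wedge(y\to x)$; $t_n(a,b)=\square^0(a\leftrightarrow b)\wedge\square(a\leftrightarrow b)\wedge\cdots\wedge\square^n(a\leftrightarrow b)$; $t_n^k(a,b)=(t_n(a,b))^k$. $R(a,b)$ is the binary relation on $A$ with $(c,d)\in R(a,b)$ iff there exist natural numbers $n,k$ such that (C1) $t_n^k(a,b)\cdot(c\wedge a\wedge b)\le d\wedge a\wedge b$ and $t_n^k(a,b)\cdot(d\wedge a\wedge b)\le c\wedge a\wedge b$; (C2) $t_n^k(a,b)\cdot(c\vee a\vee b)\le d\vee a\vee b$ and $t_n^k(a,b)\cdot(d\vee a\vee b)\le c\vee a\vee b$; (C3) $t_n^k(a,b)\le c\leftrightarrow d$. *)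

theory Defs
  imports Main
begin

text \<open>A DLCMI: the lattice reduct is a distributive lattice with top element 1 (= top),
  given by the type class; the monoid product and the implication are locale parameters.\<close>

locale dlcmi =
  fixes mult :: "'a::{distrib_lattice,order_top} \<Rightarrow> 'a \<Rightarrow> 'a" (infixl "\<cdot>" 70)
    and imp :: "'a \<Rightarrow> 'a \<Rightarrow> 'a" (infixr "\<rightharpoonup>" 60)
  assumes mult_assoc: "(x \<cdot> y) \<cdot> z = x \<cdot> (y \<cdot> z)"
    and mult_commute: "x \<cdot> y = y \<cdot> x"
    and mult_one: "x \<cdot> top = x"
    and imp_inf: "inf (a \<rightharpoonup> b) (a \<rightharpoonup> c) = a \<rightharpoonup> inf b c"
    and imp_sup: "inf (a \<rightharpoonup> c) (b \<rightharpoonup> c) = sup a b \<rightharpoonup> c"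
    and imp_refl: "a \<rightharpoonup> a = top"
    and mult_sup: "sup a b \<cdot> c = sup (a \<cdot> c) (b \<cdot> c)"
    and imp_trans: "(a \<rightharpoonup> b) \<cdot> (b \<rightharpoonup> c) \<le> a \<rightharpoonup> c"
    and imp_mult: "a \<rightharpoonup> b \<le> (a \<cdot> c) \<rightharpoonup> (b \<cdot> c)"
begin

primrec mpow :: "'a \<Rightarrow> nat \<Rightarrow> 'a" where
  "mpow x 0 = top"
| "mpow x (Suc m) = x \<cdot> mpow x m"

definition box :: "'a \<Rightarrow> 'a" where
  "box x = top \<rightharpoonup> x"

definition biimp :: "'a \<Rightarrow> 'a \<Rightarrow> 'a" where
  "biimp x y = inf (x \<rightharpoonup> y) (y \<rightharpoonup> x)"

primrec t :: "nat \<Rightarrow> 'a \<Rightarrow> 'a \<Rightarrow> 'a" where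
  "t 0 a b = biimp a b"
| "t (Suc n) a b = inf (t n a b) ((box ^^ Suc n) (biimp a b))"

definition tk :: "nat \<Rightarrow> nat \<Rightarrow> 'a \<Rightarrow> 'a \<Rightarrow> 'a" where
  "tk n k a b = mpow (t n a b) k"

definition R :: "'a \<Rightarrow> 'a \<Rightarrow> ('a \<times> 'a) set" where
  "R a b = {(c, d). \<exists>n k.
      tk n k a b \<cdot> inf (inf c a) b \<le> inf (inf d a) b \<and>
      tk n k a b \<cdot> inf (inf d a) b \<le> inf (inf c a) b \<and>
      tk n k a b \<cdot> sup (sup c a) b \<le> sup (sup d a) b \<and>
      tk n k a b \<cdot> sup (sup d a) b \<le> sup (sup c a) b \<and>
      tk n k a b \<le> biimp c d}"

end

end

theory Submission
  imports Defs
begin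

text \<open>Choose \<open>n\<close>, \<open>k\<close> so large that \<open>T = t_n^k(a,b)\<close> lies below both \<open>c <-> d\<close> and
  \<open>u <-> w\<close>, which is possible because \<open>t_n^k\<close> decreases in \<open>n\<close> and in \<open>k\<close>. Then
  \<open>T^2 (c -> u) <= (d -> c) (c -> u) (u -> w) <= d -> w\<close> by the transitivity axiom (8), and
  symmetrically. Meeting or joining both sides with \<open>a\<close> and \<open>b\<close> preserves such an
  inequality, since \<open>T^2 x <= x\<close> and multiplication distributes over joins. Finally
  \<open>t_(n+1) <= box t_n\<close> and \<open>box\<close> is submultiplicative, so \<open>t_(n+1)^(2k) <= box (T^2)\<close>,
  while axiom (9) gives \<open>box P <= x -> y\<close> whenever \<open>P x <= y\<close>.\<close>

context dlcmi
begin

lemma mult_right_mono: "x \<le> y \<Longrightarrow> x \<cdot> z \<le> y \<cdot> z"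
  using mult_sup[of x y z] by (simp add: le_iff_sup)

lemma mult_mono:
  assumes "x \<le> y" and "z \<le> v"
  shows "x \<cdot> z \<le> y \<cdot> v"
proof -
  have "x \<cdot> z \<le> y \<cdot> z"
    using assms(1) by (rule mult_right_mono)
  also have "\<dots> = z \<cdot> y"
    by (rule mult_commute)
  also have "\<dots> \<le> v \<cdot> y"
    using assms(2) by (rule mult_right_mono)
  also have "\<dots> = y \<cdot> v"
    by (rule mult_commute)
  finally show ?thesis .
qed

lemma mult_one_left: "top \<cdot> x = x"
  using mult_commute[of top x] by (simp only: mult_one)

lemma mult_le_left: "x \<cdot> y \<le> x"
  using mult_mono[OF order_refl top_greatest, of x y] by (simp add: mult_one)

lemma mult_le_right: "x \<cdot> y \<le> y"
  using mult_le_left[of y x] by (simp only: mult_commute)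

lemma imp_mono: "y \<le> z \<Longrightarrow> x \<rightharpoonup> y \<le> x \<rightharpoonup> z"
  by (simp add: le_iff_inf imp_inf inf.absorb1)

lemma biimp_commute: "biimp x y = biimp y x"
  by (simp add: biimp_def inf_commute)

lemma mpow_add: "mpow x (m + n) = mpow x m \<cdot> mpow x n"
  by (induction m) (simp_all add: mult_one_left mult_assoc)

lemma mpow_mono: "x \<le> y \<Longrightarrow> mpow x k \<le> mpow y k"
  by (induction k) (simp_all add: mult_mono)

lemma mpow_antimono: "m \<le> n \<Longrightarrow> mpow x n \<le> mpow x m"
  using mpow_add[of x m "n - m"] mult_le_left by simp

lemma t_antimono: "m \<le> n \<Longrightarrow> t n a b \<le> t m a b"
  by (induction n rule: dec_induct) (auto intro: le_infI1)

lemma tk_antimono: "n \<le> n' \<Longrightarrow> k \<le> k' \<Longrightarrow> tk n' k' a b \<le> tk n k a b"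
  unfolding tk_def by (rule order_trans[OF mpow_mono[OF t_antimono] mpow_antimono])

lemma tk_double: "tk n (2 * k) a b = tk n k a b \<cdot> tk n k a b"
  by (simp only: tk_def mult_2 mpow_add)

lemma box_top: "box top = top"
  by (simp add: box_def imp_refl)

lemma box_inf: "box (inf x y) = inf (box x) (box y)"
  by (simp add: box_def imp_inf)

lemma le_box_imp: "p \<cdot> x \<le> y \<Longrightarrow> box p \<le> x \<rightharpoonup> y"
  using imp_mult[of top p x] imp_mono[of "p \<cdot> x" y x]
  by (simp add: box_def mult_one_left)

lemma box_mult_le: "box x \<cdot> box y \<le> box (x \<cdot> y)"
proof -
  have "box x \<cdot> box y \<le> (y \<rightharpoonup> x \<cdot> y) \<cdot> box y"
    by (rule mult_right_mono) (simp add: le_box_imp mult_commute)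
  also have "\<dots> = (top \<rightharpoonup> y) \<cdot> (y \<rightharpoonup> x \<cdot> y)"
    by (simp add: box_def mult_commute)
  also have "\<dots> \<le> box (x \<cdot> y)"
    unfolding box_def by (rule imp_trans)
  finally show ?thesis .
qed

lemma box_mpow_le: "mpow (box x) k \<le> box (mpow x k)"
  by (induction k) (auto simp: box_top intro: order_trans[OF mult_mono box_mult_le])

lemma t_Suc_le_box: "t (Suc n) a b \<le> box (t n a b)"
proof (induction n)
  case (Suc n)
  have "t (Suc (Suc n)) a b = inf (t (Suc n) a b) (box ((box ^^ Suc n) (biimp a b)))"
    by simp
  also have "\<dots> \<le> inf (box (t n a b)) (box ((box ^^ Suc n) (biimp a b)))"
    using Suc.IH by (rule inf_mono) simp
  also have "\<dots> = box (t (Suc n) a b)"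
    by (simp add: box_inf)
  finally show ?case .
qed simp

lemma tk_Suc_le_box: "tk (Suc n) k a b \<le> box (tk n k a b)"
  unfolding tk_def by (rule order_trans[OF mpow_mono[OF t_Suc_le_box] box_mpow_le])

lemma imp_compatible:
  assumes "p \<le> biimp c d" and "p \<le> biimp u w"
  shows "(p \<cdot> p) \<cdot> (c \<rightharpoonup> u) \<le> d \<rightharpoonup> w"
proof -
  have "(p \<cdot> p) \<cdot> (c \<rightharpoonup> u) = (p \<cdot> (c \<rightharpoonup> u)) \<cdot> p"
    by (simp only: mult_assoc mult_commute[of "c \<rightharpoonup> u" p])
  also have "\<dots> \<le> ((d \<rightharpoonup> c) \<cdot> (c \<rightharpoonup> u)) \<cdot> (u \<rightharpoonup> w)"
    using assms by (simp add: biimp_def mult_mono)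
  also have "\<dots> \<le> (d \<rightharpoonup> u) \<cdot> (u \<rightharpoonup> w)"
    by (rule mult_right_mono[OF imp_trans])
  also have "\<dots> \<le> d \<rightharpoonup> w"
    by (rule imp_trans)
  finally show ?thesis .
qed

lemma mult_le_inf_inf:
  assumes "p \<cdot> x \<le> y"
  shows "p \<cdot> inf (inf x a) b \<le> inf (inf y a) b"
proof -
  have "p \<cdot> inf (inf x a) b \<le> y"
    by (rule order_trans[OF mult_mono[OF order_refl] assms]) (simp add: inf.coboundedI1)
  then show ?thesis
    using mult_le_right[of p "inf (inf x a) b"] by (simp add: le_inf_iff)
qed

lemma mult_le_sup_sup:
  assumes "p \<cdot> x \<le> y"
  shows "p \<cdot> sup (sup x a) b \<le> sup (sup y a) b"
proof -
  have "p \<cdot> sup (sup x a) b = sup (sup (p \<cdot> x) (p \<cdot> a)) (p \<cdot> b)"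
    by (simp only: mult_commute[of p] mult_sup)
  with assms show ?thesis
    using mult_le_right[of p a] mult_le_right[of p b]
    by (simp add: le_supI1 le_supI2 sup.coboundedI1 sup_mono)
qed

lemma R_common_bound:
  assumes "(c, d) \<in> R a b" and "(u, w) \<in> R a b"
  obtains n k where "tk n k a b \<le> biimp c d" and "tk n k a b \<le> biimp u w"
proof -
  obtain n1 k1 n2 k2 where "tk n1 k1 a b \<le> biimp c d" and "tk n2 k2 a b \<le> biimp u w"
    using assms unfolding R_def by blast
  then show thesis
    using that[of "n1 + n2" "k1 + k2"] tk_antimono[of n1 "n1 + n2" k1 "k1 + k2"]
      tk_antimono[of n2 "n1 + n2" k2 "k1 + k2"] by (meson le_add1 le_add2 order_trans)
qed

end

theorem lemma3p8:
  fixes mult :: "'a::{distrib_lattice,order_top} \<Rightarrow> 'a \<Rightarrow> 'a"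
    and imp :: "'a \<Rightarrow> 'a \<Rightarrow> 'a"
    and a b c d u w :: 'a
  assumes "dlcmi mult imp"
    and "(c, d) \<in> dlcmi.R mult imp a b"
    and "(u, w) \<in> dlcmi.R mult imp a b"
  shows "\<exists>n k.
    mult (dlcmi.tk mult imp n (2 * k) a b) (imp c u) \<le> imp d w \<and>
    mult (dlcmi.tk mult imp n (2 * k) a b) (inf (inf (imp c u) a) b) \<le> inf (inf (imp d w) a) b \<and>
    mult (dlcmi.tk mult imp n (2 * k) a b) (inf (inf (imp d w) a) b) \<le> inf (inf (imp c u) a) b \<and>
    mult (dlcmi.tk mult imp n (2 * k) a b) (sup (sup (imp c u) a) b) \<le> sup (sup (imp d w) a) b \<and>
    mult (dlcmi.tk mult imp n (2 * k) a b) (sup (sup (imp d w) a) b) \<le> sup (sup (imp c u) a) b \<and>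
    dlcmi.tk mult imp (Suc n) (2 * k) a b \<le> dlcmi.biimp imp (imp c u) (imp d w)"
proof -
  interpret dlcmi mult imp by fact
  obtain n k where cd: "tk n k a b \<le> biimp c d" and uw: "tk n k a b \<le> biimp u w"
    using R_common_bound assms(2,3) .
  have cu_dw: "mult (tk n (2 * k) a b) (imp c u) \<le> imp d w"
    unfolding tk_double using cd uw by (rule imp_compatible)
  have dw_cu: "mult (tk n (2 * k) a b) (imp d w) \<le> imp c u"
    unfolding tk_double using cd uw by (intro imp_compatible) (simp_all add: biimp_commute)
  have "tk (Suc n) (2 * k) a b \<le> biimp (imp c u) (imp d w)"
    unfolding biimp_def
    using order_trans[OF tk_Suc_le_box le_box_imp[OF cu_dw]]
      order_trans[OF tk_Suc_le_box le_box_imp[OF dw_cu]] by simp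
  with cu_dw dw_cu show ?thesis
    using mult_le_inf_inf[OF cu_dw] mult_le_inf_inf[OF dw_cu]
      mult_le_sup_sup[OF cu_dw] mult_le_sup_sup[OF dw_cu] by blast
qed

end
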